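(* Let $\Omega$ be a slice domain in $\mathbb{H}$ and let $F:\Omega\to M_n(\mathbb{H})$ be a regular matrix-valued function. Suppose there exist $I\in\mathbb{S}$ and $q_0\in\Omega_I$ such that $\Vert F(q)\Vert\le\Vert F(q_0)\Vert$ for all $q\in\Omega$, and let $x_0\in\mathbb{H}^n$ be a maximizing vector for $F(q_0)$. Then $F^{(k)}(q_0)x_0=0$ for all $k\ge1$, where $F^{(k)}$ denotes the $k$-th (slice) derivative of $F$.
   Context: $\mathbb{H}$ denotes the real quaternions; $\mathbb{S}=\{q\in\mathbb{H}:q^2=-1\}$; for $I\in\mathbb{S}$, $L_I=\mathbb{R}+\mathbb{R}I$ and $\Omega_I=\Omega\cap L_I$. A domain $\Omega\subseteq\mathbb{H}$ (open connected set) is a slice domain if it meets the real axis and $\Omega_I$ is a domain in $L_I$ for every $I\in\mathbb{S}$. A function $f:\Omega\to\mathbb{H}$ is (left) regular if for every $I\in\mathbb{S}$, $\frac12(\partial_x+I\partial_y)f(x+yI)=0$ on $\Omega_I$; its slice derivative is $f'(x+yI)=\partial_x f(x+yI)$, and $f^{(k)}$ is the $k$-th iterate. A matrix-valued function is regular if each entry is regular, and derivatives are taken entrywise. $\mathbb{H}^n$ is the space of quaternionic column vectors with $\Vert x\Vert_2=(x^*x)^{1/2}$; $\Vert A\Vert=\sup_{x\ne0}\Vert Ax\Vert_2/\Vert x\Vert_2$ is the operator norm. A unit vector $x_0\in\mathbb{H}^n$ is a maximizing vector for $A\in M_n(\mathbb{H})$ if $\Vert Ax_0\Vert_2=\Vert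 A\Vert$. *)

theory Defs
  imports "HOL-Analysis.Analysis"
begin

text \<open>A quaternion a + b i + c j + d k is the vector with components
  a, b, c, d (indices 1, 2, 3, 4 of the numeral type 4).  The norm on
  real^4 is the Euclidean norm, i.e. the usual quaternionic modulus.\<close>

type_synonym quat = "real ^ 4"

definition Quat :: "real \<Rightarrow> real \<Rightarrow> real \<Rightarrow> real \<Rightarrow> quat" where
  "Quat a b c d = (\<chi> i. if i = 1 then a else if i = 2 then b else if i = 3 then c else d)"

definition qre :: "quat \<Rightarrow> real" where "qre q = q $ 1"
definition qi :: "quat \<Rightarrow> real" where "qi q = q $ 2"
definition qj :: "quat \<Rightarrow> real" where "qj q = q $ 3"
definition qk :: "quat \<Rightarrow> real" where "qk q = q $ 4"

definition qmul :: "quat \<Rightarrow> quat \<Rightarrow> quat" (infixl "\<star>" 70) where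
  "p \<star> q = Quat
     (qre p * qre q - qi p * qi q - qj p * qj q - qk p * qk q)
     (qre p * qi q + qi p * qre q + qj p * qk q - qk p * qj q)
     (qre p * qj q - qi p * qk q + qj p * qre q + qk p * qi q)
     (qre p * qk q + qi p * qj q - qj p * qi q + qk p * qre q)"

definition qreal :: "real \<Rightarrow> quat" where "qreal r = Quat r 0 0 0"

definition qS :: "quat set" where "qS = {q. q \<star> q = - qreal 1}"

definition slice :: "quat \<Rightarrow> quat set" where
  "slice I = {qreal x + y *\<^sub>R I | x y. True}"

definition slice_domain :: "quat set \<Rightarrow> bool" where
  "slice_domain \<Omega> \<longleftrightarrow> open \<Omega> \<and> connected \<Omega> \<and> \<Omega> \<inter> range qreal \<noteq> {}
     \<and> (\<forall>I\<in>qS. connected (\<Omega> \<inter> slice I))"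

definition regular :: "quat set \<Rightarrow> (quat \<Rightarrow> quat) \<Rightarrow> bool" where
  "regular \<Omega> f \<longleftrightarrow> (\<forall>I\<in>qS. \<forall>x y. qreal x + y *\<^sub>R I \<in> \<Omega> \<longrightarrow>
      ((\<lambda>(a::real, b::real). f (qreal a + b *\<^sub>R I)) differentiable (at (x, y)))
      \<and> (1/2) *\<^sub>R (vector_derivative (\<lambda>a. f (qreal a + y *\<^sub>R I)) (at x)
            + I \<star> vector_derivative (\<lambda>b. f (qreal x + b *\<^sub>R I)) (at y)) = 0)"

definition sderiv :: "(quat \<Rightarrow> quat) \<Rightarrow> quat \<Rightarrow> quat" where
  "sderiv f q = vector_derivative (\<lambda>t. f (q + qreal t)) (at 0)"

text \<open>Quaternionic matrices (n x n, n = CARD('n)) and vectors in H^n.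
  The norm on quat^'n is the Euclidean norm ||x||_2 = (x^* x)^(1/2).\<close>
definition qmatvec :: "quat ^'n ^'n \<Rightarrow> quat ^'n \<Rightarrow> quat ^'n" where
  "qmatvec A x = (\<chi> i. \<Sum>j\<in>UNIV. (A $ i $ j) \<star> (x $ j))"

definition qopnorm :: "quat ^'n ^'n \<Rightarrow> real" where
  "qopnorm A = onorm (qmatvec A)"

definition matrix_regular :: "quat set \<Rightarrow> (quat \<Rightarrow> quat ^'n ^'n) \<Rightarrow> bool" where
  "matrix_regular \<Omega> F \<longleftrightarrow> (\<forall>i j. regular \<Omega> (\<lambda>q. F q $ i $ j))"

definition msderiv :: "nat \<Rightarrow> (quat \<Rightarrow> quat ^'n ^'n) \<Rightarrow> quat \<Rightarrow> quat ^'n ^'n" where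
  "msderiv k F q = (\<chi> i j. (sderiv ^^ k) (\<lambda>p. F p $ i $ j) q)"

definition maximizing_vector :: "quat ^'n ^'n \<Rightarrow> quat ^'n \<Rightarrow> bool" where
  "maximizing_vector A x \<longleftrightarrow> norm x = 1 \<and> norm (qmatvec A x) = qopnorm A"

end

(* On the slice L_I, identified with C by z |-> Re z + Im z I, a regular function is complex
   differentiable for the complex structure on H given by left multiplication by I.  The four
   coordinates slice_coord I c are complex linear for that structure, so they turn every entry of F
   into ordinary holomorphic functions, and slice derivatives of all orders along L_I become real
   parts of complex derivatives.

   Put g z = F(z) x0.  The holomorphic function H z = sum_(i,c) (g z0)_ic slice_coord I c (g_i z)
   satisfies Re H z = <g z, g z0> <= |g z| |g z0| <= |g z0|^2 = Re H z0, so by the maximum modulus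
   principle for exp H the real part of H is constant near z0, and the equality case of
   Cauchy-Schwarz makes g constant near z0.  All real-direction derivatives of g at z0, which are
   the F^(k)(q0) x0, therefore vanish. *)

theory Submission
  imports Defs "HOL-Complex_Analysis.Complex_Analysis"
begin

lemma Quat_nth [simp]:
  "Quat a b c d $ 1 = a" "Quat a b c d $ 2 = b" "Quat a b c d $ 3 = c" "Quat a b c d $ 4 = d"
  by (simp_all add: Quat_def)

lemma quat_eqI:
  "p $ 1 = q $ 1 \<Longrightarrow> p $ 2 = q $ 2 \<Longrightarrow> p $ 3 = q $ 3 \<Longrightarrow> p $ 4 = q $ 4 \<Longrightarrow> p = (q::quat)"
  unfolding vec_eq_iff using exhaust_4 by metis

lemma qmul_assoc: "(p \<star> q) \<star> r = p \<star> (q \<star> r)"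
  by (rule quat_eqI) (simp_all add: qmul_def qre_def qi_def qj_def qk_def algebra_simps)

lemma bounded_bilinear_qmul: "bounded_bilinear (\<star>)"
proof -
  have "bilinear (\<star>)"
    unfolding bilinear_def
    by (auto intro!: linearI quat_eqI simp: qmul_def qre_def qi_def qj_def qk_def algebra_simps)
  then show ?thesis
    by (simp add: bilinear_conv_bounded_bilinear)
qed

interpretation qmul: bounded_bilinear "(\<star>)"
  by (rule bounded_bilinear_qmul)

lemma qmul_one_left [simp]: "qreal 1 \<star> p = p"
  by (rule quat_eqI) (simp_all add: qmul_def qre_def qi_def qj_def qk_def qreal_def)

lemma qreal_add: "qreal (a + b) = qreal a + qreal b"
  by (rule quat_eqI) (simp_all add: qreal_def)

lemma qS_qmul_qmul: "I \<in> qS \<Longrightarrow> I \<star> (I \<star> p) = - p"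
  by (simp add: qS_def qmul.minus_left flip: qmul_assoc)

lemma qreal_eq_scaleR: "qreal r = r *\<^sub>R qreal 1"
  by (rule quat_eqI) (simp_all add: qreal_def)

definition slice_param :: "quat \<Rightarrow> complex \<Rightarrow> quat" where
  "slice_param I z = qreal (Re z) + Im z *\<^sub>R I"

lemma bounded_linear_slice_param: "bounded_linear (slice_param I)"
  unfolding slice_param_def qreal_eq_scaleR[of "Re _"]
  by (intro bounded_linear_intros bounded_linear_Re bounded_linear_Im)

lemma open_slice_param_vimage: "open \<Omega> \<Longrightarrow> open (slice_param I -` \<Omega>)"
  using bounded_linear_slice_param
  by (intro continuous_open_vimage) (auto intro: linear_continuous_at)

lemma slice_eq_range_slice_param: "slice I = range (slice_param I)"
proof (intro equalityI subsetI)
  fix q assume "q \<in> slice I"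
  then obtain x y where "q = qreal x + y *\<^sub>R I"
    by (auto simp: slice_def)
  then show "q \<in> range (slice_param I)"
    using rangeI[of "slice_param I" "Complex x y"] by (simp add: slice_param_def)
qed (auto simp: slice_def slice_param_def)

lemma slice_param_add_of_real: "slice_param I (z + of_real t) = slice_param I z + qreal t"
  by (simp add: slice_param_def qreal_add)

lemma slice_param_qmul: "slice_param I w \<star> A = Re w *\<^sub>R A + Im w *\<^sub>R (I \<star> A)"
  by (simp add: slice_param_def qreal_eq_scaleR[of "Re w"] qmul.add_left qmul.scaleR_left)

definition slice_holomorphic :: "quat \<Rightarrow> complex set \<Rightarrow> (complex \<Rightarrow> quat) \<Rightarrow> bool" where
  "slice_holomorphic I U \<psi> \<longleftrightarrow>
     (\<forall>z\<in>U. \<exists>A. (\<psi> has_derivative (\<lambda>w. slice_param I w \<star> A)) (at z))"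

lemma has_derivative_at_pair_imp_partials:
  fixes g :: "real \<times> real \<Rightarrow> 'a::real_normed_vector"
  assumes g: "(g has_derivative D) (at (x, y))"
  shows "((\<lambda>a. g (a, y)) has_vector_derivative D (1, 0)) (at x)"
    and "((\<lambda>b. g (x, b)) has_vector_derivative D (0, 1)) (at y)"
proof -
  have D: "linear D"
    using g by (simp add: has_derivative_linear)
  have "((\<lambda>a. (a, y)) has_derivative (\<lambda>a. (a, 0))) (at x)"
    by (auto intro!: derivative_eq_intros)
  from has_derivative_compose[OF this g]
  have "((\<lambda>a. g (a, y)) has_derivative (\<lambda>a. D (a, 0))) (at x)"
    by simp
  moreover have "(\<lambda>a. D (a, 0)) = (\<lambda>a. a *\<^sub>R D (1, 0))"
    using linear.scaleR[OF D, of _ "(1, 0)", symmetric] by simp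
  ultimately show "((\<lambda>a. g (a, y)) has_vector_derivative D (1, 0)) (at x)"
    by (simp only: has_vector_derivative_def)
  have "((\<lambda>b. (x, b)) has_derivative (\<lambda>b. (0, b))) (at y)"
    by (auto intro!: derivative_eq_intros)
  from has_derivative_compose[OF this g]
  have "((\<lambda>b. g (x, b)) has_derivative (\<lambda>b. D (0, b))) (at y)"
    by simp
  moreover have "(\<lambda>b. D (0, b)) = (\<lambda>b. b *\<^sub>R D (0, 1))"
    using linear.scaleR[OF D, of _ "(0, 1)", symmetric] by simp
  ultimately show "((\<lambda>b. g (x, b)) has_vector_derivative D (0, 1)) (at y)"
    by (simp only: has_vector_derivative_def)
qed

lemma regular_imp_slice_holomorphic:
  assumes I: "I \<in> qS" and f: "regular \<Omega> f"
  shows "slice_holomorphic I (slice_param I -` \<Omega>) (\<lambda>z. f (slice_param I z))"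
  unfolding slice_holomorphic_def
proof
  fix z assume "z \<in> slice_param I -` \<Omega>"
  then have "qreal (Re z) + Im z *\<^sub>R I \<in> \<Omega>"
    by (simp add: slice_param_def)
  then obtain D
    where D: "((\<lambda>(a, b). f (qreal a + b *\<^sub>R I)) has_derivative D) (at (Re z, Im z))"
      and CR: "vector_derivative (\<lambda>a. f (qreal a + Im z *\<^sub>R I)) (at (Re z))
               + I \<star> vector_derivative (\<lambda>b. f (qreal (Re z) + b *\<^sub>R I)) (at (Im z)) = 0"
    using f I unfolding regular_def differentiable_def by fastforce
  have "linear D"
    using D by (simp add: has_derivative_linear)
  have "D (1, 0) + I \<star> D (0, 1) = 0"
    using CR has_derivative_at_pair_imp_partials[OF D] by (simp add: vector_derivative_at)
  then have ID: "I \<star> D (1, 0) = D (0, 1)"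
    using qS_qmul_qmul[OF I] by (metis add_eq_0_iff2 minus_minus qmul.minus_right)
  have "((\<lambda>w. (Re w, Im w)) has_derivative (\<lambda>w. (Re w, Im w))) (at z)"
    by (intro bounded_linear_imp_has_derivative bounded_linear_Pair bounded_linear_Re bounded_linear_Im)
  from has_derivative_compose[OF this D]
  have deriv: "((\<lambda>w. f (slice_param I w)) has_derivative (\<lambda>w. D (Re w, Im w))) (at z)"
    by (simp add: slice_param_def)
  have eq: "(\<lambda>w. D (Re w, Im w)) = (\<lambda>w. slice_param I w \<star> D (1, 0))"
  proof
    fix w
    have "D (Re w, Im w) = Re w *\<^sub>R D (1, 0) + Im w *\<^sub>R D (0, 1)"
      using linear_add[OF \<open>linear D\<close>, of "(Re w, 0)" "(0, Im w)"]
        linear.scaleR[OF \<open>linear D\<close>, of "Re w" "(1, 0)", symmetric]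
        linear.scaleR[OF \<open>linear D\<close>, of "Im w" "(0, 1)", symmetric]
      by simp
    then show "D (Re w, Im w) = slice_param I w \<star> D (1, 0)"
      by (simp add: slice_param_qmul ID)
  qed
  show "\<exists>A. ((\<lambda>w. f (slice_param I w)) has_derivative (\<lambda>w. slice_param I w \<star> A)) (at z)"
    using deriv[unfolded eq] by blast
qed

lemma slice_holomorphic_qmul_right:
  assumes "slice_holomorphic I U \<psi>"
  shows "slice_holomorphic I U (\<lambda>z. \<psi> z \<star> p)"
  unfolding slice_holomorphic_def
proof
  fix z assume "z \<in> U"
  then obtain A where "(\<psi> has_derivative (\<lambda>w. slice_param I w \<star> A)) (at z)"
    using assms unfolding slice_holomorphic_def by blast
  from bounded_linear.has_derivative[OF qmul.bounded_linear_left this]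
  have "((\<lambda>z. \<psi> z \<star> p) has_derivative (\<lambda>w. slice_param I w \<star> (A \<star> p))) (at z)"
    by (simp add: qmul_assoc)
  then show "\<exists>A. ((\<lambda>z. \<psi> z \<star> p) has_derivative (\<lambda>w. slice_param I w \<star> A)) (at z)"
    by blast
qed

lemma slice_holomorphic_sum:
  assumes "finite S" and "\<And>j. j \<in> S \<Longrightarrow> slice_holomorphic I U (\<psi> j)"
  shows "slice_holomorphic I U (\<lambda>z. \<Sum>j\<in>S. \<psi> j z)"
  unfolding slice_holomorphic_def
proof
  fix z assume "z \<in> U"
  then have "\<forall>j\<in>S. \<exists>A. (\<psi> j has_derivative (\<lambda>w. slice_param I w \<star> A)) (at z)"
    using assms(2) unfolding slice_holomorphic_def by blast
  then obtain A where "\<And>j. j \<in> S \<Longrightarrow> (\<psi> j has_derivative (\<lambda>w. slice_param I w \<star> A j)) (at z)"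
    by metis
  from has_derivative_sum[OF this]
  have "((\<lambda>z. \<Sum>j\<in>S. \<psi> j z) has_derivative (\<lambda>w. slice_param I w \<star> (\<Sum>j\<in>S. A j))) (at z)"
    by (simp add: qmul.sum_right)
  then show "\<exists>A. ((\<lambda>z. \<Sum>j\<in>S. \<psi> j z) has_derivative (\<lambda>w. slice_param I w \<star> A)) (at z)"
    by blast
qed

lemma slice_holomorphic_qmatvec:
  assumes "I \<in> qS" and "matrix_regular \<Omega> F"
  shows "slice_holomorphic I (slice_param I -` \<Omega>) (\<lambda>z. qmatvec (F (slice_param I z)) x $ i)"
  using assms unfolding qmatvec_def matrix_regular_def vec_lambda_beta
  by (intro slice_holomorphic_sum slice_holomorphic_qmul_right regular_imp_slice_holomorphic) auto

(* The imaginary part is chosen so that left multiplication by I becomes multiplication by i. *)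
definition slice_coord :: "quat \<Rightarrow> 4 \<Rightarrow> quat \<Rightarrow> complex" where
  "slice_coord I c q = Complex (q $ c) (- (I \<star> q) $ c)"

lemma Re_slice_coord [simp]: "Re (slice_coord I c q) = q $ c"
  by (simp add: slice_coord_def)

lemma bounded_linear_slice_coord: "bounded_linear (slice_coord I c)"
proof -
  have "linear (slice_coord I c)"
    by (rule linearI) (simp_all add: slice_coord_def qmul.add_right qmul.scaleR_right complex_eq_iff)
  then show ?thesis
    by (simp add: linear_conv_bounded_linear)
qed

lemma slice_coord_slice_param_qmul:
  assumes "I \<in> qS"
  shows "slice_coord I c (slice_param I w \<star> q) = w * slice_coord I c q"
  using qS_qmul_qmul[OF assms, of q]
  by (simp add: slice_coord_def slice_param_qmul qmul.add_right qmul.scaleR_right complex_eq_iff)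

lemma slice_holomorphic_imp_holomorphic_coord:
  assumes I: "I \<in> qS" and "open U" and \<psi>: "slice_holomorphic I U \<psi>"
  shows "(\<lambda>z. slice_coord I c (\<psi> z)) holomorphic_on U"
  unfolding holomorphic_on_open[OF \<open>open U\<close>]
proof
  fix z assume "z \<in> U"
  then obtain A where "(\<psi> has_derivative (\<lambda>w. slice_param I w \<star> A)) (at z)"
    using \<psi> unfolding slice_holomorphic_def by blast
  from bounded_linear.has_derivative[OF bounded_linear_slice_coord[of I c] this]
  have "((\<lambda>z. slice_coord I c (\<psi> z)) has_derivative (\<lambda>w. w * slice_coord I c A)) (at z)"
    by (simp add: slice_coord_slice_param_qmul[OF I])
  then show "\<exists>f'. ((\<lambda>z. slice_coord I c (\<psi> z)) has_field_derivative f') (at z)"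
    by (auto simp: has_field_derivative_def mult_commute_abs)
qed

lemma has_vector_derivative_vec_componentwise:
  fixes f :: "real \<Rightarrow> 'a::euclidean_space ^'n"
  assumes "\<And>i. ((\<lambda>t. f t $ i) has_vector_derivative f' $ i) (at x within S)"
  shows "(f has_vector_derivative f') (at x within S)"
  using assms unfolding has_vector_derivative_def
  by (subst has_derivative_componentwise_within)
    (auto simp: Basis_vec_def inner_axis has_derivative_componentwise_within[of "\<lambda>t. f t $ _"])

lemma has_vector_derivative_Re_along_real:
  assumes "(g has_field_derivative g') (at z)"
  shows "((\<lambda>t. Re (g (z + of_real t))) has_vector_derivative Re g') (at 0)"
proof -
  have "((\<lambda>t. z + of_real t) has_vector_derivative 1) (at 0)"
    by (auto intro!: derivative_eq_intros)
  from field_vector_diff_chain_at[OF this] assms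
  have "((\<lambda>t. g (z + of_real t)) has_vector_derivative g') (at 0)"
    by (simp add: o_def)
  then show ?thesis
    by (rule bounded_linear.has_vector_derivative[OF bounded_linear_Re])
qed

lemma has_vector_derivative_along_real_from_coords:
  assumes "open U" and "z \<in> U" and "\<And>c. h c holomorphic_on U"
    and "\<And>z. z \<in> U \<Longrightarrow> \<phi> (slice_param I z) = (\<chi> c. Re (h c z))"
  shows "((\<lambda>t. \<phi> (slice_param I z + qreal t)) has_vector_derivative (\<chi> c. Re (deriv (h c) z))) (at 0)"
proof (rule has_vector_derivative_transform_within_open)
  show "((\<lambda>t. \<chi> c. Re (h c (z + of_real t))) has_vector_derivative (\<chi> c. Re (deriv (h c) z))) (at 0)"
    using has_vector_derivative_Re_along_real[OF holomorphic_derivI[OF assms(3) assms(1,2)]]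
    by (intro has_vector_derivative_vec_componentwise) simp
  show "open ((\<lambda>t. z + of_real t) -` U)"
    using \<open>open U\<close> by (intro continuous_open_vimage) (auto intro!: continuous_intros)
qed (use assms in \<open>auto simp flip: slice_param_add_of_real\<close>)

lemma higher_sderiv_slice_coords:
  assumes I: "I \<in> qS" and U: "open U" and f: "slice_holomorphic I U (\<lambda>z. f (slice_param I z))"
  shows "z \<in> U \<Longrightarrow> (sderiv ^^ m) f (slice_param I z)
           = (\<chi> c. Re ((deriv ^^ m) (\<lambda>z. slice_coord I c (f (slice_param I z))) z))"
proof (induction m arbitrary: z)
  case 0
  then show ?case
    by (simp add: vec_eq_iff)
next
  case (Suc m)
  define h where "h c = (deriv ^^ m) (\<lambda>z. slice_coord I c (f (slice_param I z)))" for c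
  have "h c holomorphic_on U" for c
    unfolding h_def
    by (intro holomorphic_higher_deriv slice_holomorphic_imp_holomorphic_coord I U f)
  from has_vector_derivative_along_real_from_coords[OF U Suc.prems this Suc.IH[folded h_def]]
  show ?case
    by (simp add: sderiv_def h_def vector_derivative_at)
qed

lemma has_vector_derivative_higher_sderiv:
  assumes I: "I \<in> qS" and U: "open U" and f: "slice_holomorphic I U (\<lambda>z. f (slice_param I z))"
    and "z \<in> U"
  shows "((\<lambda>t. (sderiv ^^ m) f (slice_param I z + qreal t)) has_vector_derivative
           (sderiv ^^ Suc m) f (slice_param I z)) (at 0)"
proof -
  define h where "h c = (deriv ^^ m) (\<lambda>z. slice_coord I c (f (slice_param I z)))" for c
  have "h c holomorphic_on U" for c
    unfolding h_def
    by (intro holomorphic_higher_deriv slice_holomorphic_imp_holomorphic_coord I U f)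
  moreover have "(sderiv ^^ m) f (slice_param I w) = (\<chi> c. Re (h c w))" if "w \<in> U" for w
    using higher_sderiv_slice_coords[OF I U f that] by (simp add: h_def)
  ultimately have "((\<lambda>t. (sderiv ^^ m) f (slice_param I z + qreal t)) has_vector_derivative
      (\<chi> c. Re (deriv (h c) z))) (at 0)"
    by (rule has_vector_derivative_along_real_from_coords[OF U \<open>z \<in> U\<close>])
  also have "(\<chi> c. Re (deriv (h c) z)) = (sderiv ^^ Suc m) f (slice_param I z)"
    using higher_sderiv_slice_coords[OF I U f \<open>z \<in> U\<close>, of "Suc m"] by (simp add: h_def)
  finally show ?thesis .
qed

lemma msderiv_0 [simp]: "msderiv 0 F q = F q"
  by (simp add: msderiv_def vec_eq_iff)

lemma bounded_linear_qmatvec: "bounded_linear (qmatvec A)"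
proof -
  have "linear (qmatvec A)"
    by (rule linearI)
      (simp_all add: qmatvec_def vec_eq_iff qmul.add_right qmul.scaleR_right sum.distrib scaleR_sum_right)
  then show ?thesis
    by (simp add: linear_conv_bounded_linear)
qed

lemma has_vector_derivative_qmatvec_msderiv:
  assumes I: "I \<in> qS" and "open \<Omega>" and F: "matrix_regular \<Omega> F" and "slice_param I z \<in> \<Omega>"
  shows "((\<lambda>t. qmatvec (msderiv m F (slice_param I z + qreal t)) x) has_vector_derivative
           qmatvec (msderiv (Suc m) F (slice_param I z)) x) (at 0)"
proof -
  have "slice_holomorphic I (slice_param I -` \<Omega>) (\<lambda>z. F (slice_param I z) $ i $ j)" for i j
    using F unfolding matrix_regular_def by (intro regular_imp_slice_holomorphic I) blast
  note deriv_ij = has_vector_derivative_higher_sderiv[OF I open_slice_param_vimage[OF \<open>open \<Omega>\<close>] this]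
  show ?thesis
    unfolding qmatvec_def msderiv_def
    by (rule has_vector_derivative_vec_componentwise, simp only: vec_lambda_beta,
        intro has_vector_derivative_sum bounded_linear.has_vector_derivative[OF qmul.bounded_linear_left]
        deriv_ij) (use assms(4) in simp)
qed

lemma holomorphic_Re_maximum_imp_const:
  assumes "f holomorphic_on S" and "open S" and "connected S" and "\<xi> \<in> S"
    and "\<And>z. z \<in> S \<Longrightarrow> Re (f z) \<le> Re (f \<xi>)" and "z \<in> S"
  shows "Re (f z) = Re (f \<xi>)"
proof -
  have "(exp \<circ> f) constant_on S"
    using assms(1-5)
    by (intro maximum_modulus_principle[where U = S and \<xi> = \<xi>])
      (auto intro: holomorphic_on_compose holomorphic_intros simp: norm_exp_eq_Re)
  then have "exp (f z) = exp (f \<xi>)"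
    using \<open>z \<in> S\<close> \<open>\<xi> \<in> S\<close> unfolding constant_on_def by (metis comp_apply)
  then show ?thesis
    by (metis exp_inj_iff norm_exp_eq_Re)
qed

lemma inner_eq_inner_self_imp_eq:
  fixes x w :: "'a::real_inner"
  assumes "norm x \<le> norm w" and "inner x w = inner w w"
  shows "x = w"
proof -
  have "inner x x \<le> inner w w"
    using assms(1) by (simp add: dot_square_norm power_mono)
  then have "inner (x - w) (x - w) \<le> 0"
    using assms(2) by (simp add: inner_diff inner_commute)
  then show ?thesis
    by (metis inner_gt_zero_iff linorder_not_le right_minus_eq)
qed

lemma slice_holomorphic_max_norm_imp_locally_const:
  fixes g :: "complex \<Rightarrow> quat ^'n"
  assumes I: "I \<in> qS" and U: "open U" and "z0 \<in> U"
    and g: "\<And>i. slice_holomorphic I U (\<lambda>z. g z $ i)"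
    and max: "\<And>z. z \<in> U \<Longrightarrow> norm (g z) \<le> norm (g z0)"
  obtains r where "r > 0" and "ball z0 r \<subseteq> U" and "\<And>z. z \<in> ball z0 r \<Longrightarrow> g z = g z0"
proof -
  define H where
    "H z = (\<Sum>i\<in>UNIV. \<Sum>c\<in>UNIV. of_real (g z0 $ i $ c) * slice_coord I c (g z $ i))" for z
  have "H holomorphic_on U"
    unfolding H_def by (intro holomorphic_intros slice_holomorphic_imp_holomorphic_coord I U g)
  have Re_H: "Re (H z) = inner (g z) (g z0)" for z
    by (simp add: H_def inner_vec_def Re_sum mult.commute)
  obtain r where "r > 0" and "ball z0 r \<subseteq> U"
    using U \<open>z0 \<in> U\<close> open_contains_ball by blast
  have "Re (H z) \<le> Re (H z0)" if "z \<in> U" for z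
  proof -
    have "Re (H z) \<le> norm (g z) * norm (g z0)"
      unfolding Re_H by (rule norm_cauchy_schwarz)
    also have "\<dots> \<le> Re (H z0)"
      using max[OF that] by (simp add: Re_H mult_right_mono dot_square_norm power2_eq_square)
    finally show ?thesis .
  qed
  then have Re_H_const: "Re (H z) = Re (H z0)" if "z \<in> ball z0 r" for z
    using \<open>H holomorphic_on U\<close> \<open>ball z0 r \<subseteq> U\<close> \<open>r > 0\<close> that
    by (intro holomorphic_Re_maximum_imp_const[where S = "ball z0 r"])
      (auto intro: holomorphic_on_subset)
  have "g z = g z0" if "z \<in> ball z0 r" for z
  proof (rule inner_eq_inner_self_imp_eq)
    show "norm (g z) \<le> norm (g z0)"
      using that \<open>ball z0 r \<subseteq> U\<close> max by blast
    show "inner (g z) (g z0) = inner (g z0) (g z0)"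
      using Re_H_const[OF that] by (simp only: Re_H)
  qed
  with \<open>r > 0\<close> \<open>ball z0 r \<subseteq> U\<close> show ?thesis
    using that by blast
qed

lemma iterated_derivatives_vanish_where_const:
  fixes \<phi> :: "nat \<Rightarrow> 'a::real_normed_vector \<Rightarrow> 'b::real_normed_vector"
  assumes B: "open B" and const: "\<And>z. z \<in> B \<Longrightarrow> \<phi> 0 z = c"
    and deriv: "\<And>m z. z \<in> B \<Longrightarrow> ((\<lambda>t. \<phi> m (z + t *\<^sub>R v)) has_vector_derivative \<phi> (Suc m) z) (at 0)"
    and "z \<in> B" and "m \<noteq> 0"
  shows "\<phi> m z = 0"
proof -
  have next_zero: "\<phi> (Suc m) z = 0" if "\<And>z. z \<in> B \<Longrightarrow> \<phi> m z = d" and "z \<in> B" for m d z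
  proof -
    have "((\<lambda>t. \<phi> m (z + t *\<^sub>R v)) has_vector_derivative 0) (at 0)"
    proof (rule has_vector_derivative_transform_within_open[OF has_vector_derivative_const])
      show "open ((\<lambda>t. z + t *\<^sub>R v) -` B)"
        using B by (intro continuous_open_vimage) (auto intro!: continuous_intros)
    qed (use that in auto)
    with deriv[OF \<open>z \<in> B\<close>] show ?thesis
      by (rule vector_derivative_unique_at)
  qed
  have "\<forall>z\<in>B. \<phi> (Suc m) z = 0" for m
    by (induction m) (auto intro: next_zero const)
  then show ?thesis
    using \<open>z \<in> B\<close> \<open>m \<noteq> 0\<close> not0_implies_Suc by blast
qed

lemma msderiv_qmatvec_vanish_where_const:
  assumes I: "I \<in> qS" and "open \<Omega>" and F: "matrix_regular \<Omega> F"
    and "open B" and B: "B \<subseteq> slice_param I -` \<Omega>"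
    and const: "\<And>z. z \<in> B \<Longrightarrow> qmatvec (F (slice_param I z)) x = c"
    and "z \<in> B" and "k \<noteq> 0"
  shows "qmatvec (msderiv k F (slice_param I z)) x = 0"
proof (rule iterated_derivatives_vanish_where_const
    [where \<phi> = "\<lambda>m z. qmatvec (msderiv m F (slice_param I z)) x" and v = 1])
  show "((\<lambda>t. qmatvec (msderiv m F (slice_param I (z + t *\<^sub>R 1))) x) has_vector_derivative
      qmatvec (msderiv (Suc m) F (slice_param I z)) x) (at 0)" if "z \<in> B" for m z
    using has_vector_derivative_qmatvec_msderiv[OF I \<open>open \<Omega>\<close> F] that B
    by (auto simp: scaleR_conv_of_real slice_param_add_of_real)
qed (use assms in simp_all)

lemma norm_qmatvec_le_maximizing:
  assumes "maximizing_vector A x" and "qopnorm B \<le> qopnorm A"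
  shows "norm (qmatvec B x) \<le> norm (qmatvec A x)"
proof -
  have "norm (qmatvec B x) \<le> qopnorm B * norm x"
    unfolding qopnorm_def by (rule onorm[OF bounded_linear_qmatvec])
  with assms show ?thesis
    by (simp add: maximizing_vector_def)
qed

theorem theorem3p6:
  fixes \<Omega> :: "quat set" and F :: "quat \<Rightarrow> quat ^'n ^'n"
    and I q0 :: quat and x0 :: "quat ^'n"
  assumes "slice_domain \<Omega>"
    and "matrix_regular \<Omega> F"
    and "I \<in> qS" and "q0 \<in> \<Omega> \<inter> slice I"
    and "\<forall>q\<in>\<Omega>. qopnorm (F q) \<le> qopnorm (F q0)"
    and "maximizing_vector (F q0) x0"
  shows "\<forall>k\<ge>1. qmatvec (msderiv k F q0) x0 = 0"
proof -
  have "open \<Omega>"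
    using assms(1) by (simp add: slice_domain_def)
  obtain z0 where z0: "slice_param I z0 = q0" and "z0 \<in> slice_param I -` \<Omega>"
    using assms(4) by (auto simp: slice_eq_range_slice_param)
  have "norm (qmatvec (F (slice_param I z)) x0) \<le> norm (qmatvec (F q0) x0)"
    if "z \<in> slice_param I -` \<Omega>" for z
    using that assms(5,6) by (simp add: norm_qmatvec_le_maximizing)
  then obtain r where "r > 0" and ball: "ball z0 r \<subseteq> slice_param I -` \<Omega>"
    and "\<And>z. z \<in> ball z0 r \<Longrightarrow> qmatvec (F (slice_param I z)) x0 = qmatvec (F q0) x0"
    using slice_holomorphic_max_norm_imp_locally_const[OF assms(3) open_slice_param_vimage[OF \<open>open \<Omega>\<close>]
        \<open>z0 \<in> _\<close> slice_holomorphic_qmatvec[OF assms(3,2)]] z0 by metis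
  then have "qmatvec (msderiv k F q0) x0 = 0" if "k \<noteq> 0" for k
    using msderiv_qmatvec_vanish_where_const[OF assms(3) \<open>open \<Omega>\<close> assms(2) open_ball ball] z0 that
    by (metis centre_in_ball)
  then show ?thesis
    by simp
qed

end
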